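(* Consider the FlexPD-G iterates described in the context with $\alpha,\beta>0$ and integer $T\ge1$, and let $c_1=1+\alpha\rho(B)$. Then for any $\bar p,\bar q>1$ and every $k\ge0$, \[\|x^{k+1,T-1}-x^*\|^2+\frac{\alpha}{\beta}\|\lambda^k-\lambda^*\|^2+\alpha\rho(B)\|x^k-x^*\|^2\le\Gamma_G^{T-1}\Big(c_1\|x^k-x^*\|^2+\frac{\alpha}{\beta}\|\lambda^k-\lambda^*\|^2\Big),\] where \[\Gamma_G=\max\Big\{\bar p(1+\alpha L)^2,\;1+\frac{\bar p\bar q\alpha\beta\rho(AA')}{\bar p-1},\;1+\frac{\bar p\bar q\alpha\rho(B)}{(\bar p-1)(\bar q-1)}\Big\}.\]
   Context: Setting: $n$ agents are connected by a connected undirected graph with edge set $\mathcal E$, $\epsilon=|\mathcal E|$. For $x\in\mathbb R^n$ let $f(x)=\sum_{i=1}^n f_i(x_i)$, where each $f_i:\mathbb R\to\mathbb R$ is twice differentiable with $m\le f_i''\le L$ for constants $0<m\le L$; $\nabla f(x)=(f_1'(x_1),\dots,f_n'(x_n))'$. $A\in\mathbb R^{\epsilon\times n}$ is the edge–node incidence matrix (null space spanned by the all-ones vector). $B\in\mathbb R^{n\times n}$ is symmetric positive semidefinite with the same null space as $A$, off-diagonal entries nonzero only on edges, and $\rho(B)<m$. $x^*$ is the unique minimizer of $f$ subject to $Ax=0$ and $\lambda^*$ a Lagrange multiplier with $\nabla f(x^* )+A'\lambda^*=0$, $Ax^*=0$, $Bx^*=0$, chosen in the column space of $A$. FlexPD-G: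 given $\alpha,\beta>0$, $T\ge1$, $x^0$ arbitrary, $\lambda^0=0$; for $k\ge0$: $x^{k+1,0}=x^k$; for $t=1,\dots,T$, $x^{k+1,t}=x^{k+1,t-1}-\alpha\nabla f(x^{k+1,t-1})-\alpha A'\lambda^k-\alpha Bx^k$; then $x^{k+1}=x^{k+1,T}$, $\lambda^{k+1}=\lambda^k+\beta Ax^{k+1}$. Notation: $\rho(S)$ largest eigenvalue of a symmetric matrix $S$; $\|\cdot\|$ Euclidean norm. *)

theory Defs
  imports "HOL-Analysis.Analysis"
begin

definition rho :: "real^'k^'k \<Rightarrow> real" where
  "rho S = Max {\<mu>. \<exists>v. v \<noteq> 0 \<and> S *v v = \<mu> *\<^sub>R v}"

text \<open>Edges of an undirected graph on node type 'n, indexed by edge type 'e;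
  each edge is given with an (arbitrary) orientation ends e = (tail, head).\<close>
definition adjacent :: "('e \<Rightarrow> 'n \<times> 'n) \<Rightarrow> 'n \<Rightarrow> 'n \<Rightarrow> bool" where
  "adjacent ends u v \<longleftrightarrow> (\<exists>e. ends e = (u, v) \<or> ends e = (v, u))"

definition simple_connected_graph :: "('e::finite \<Rightarrow> 'n::finite \<times> 'n) \<Rightarrow> bool" where
  "simple_connected_graph ends \<longleftrightarrow>
     (\<forall>e. fst (ends e) \<noteq> snd (ends e)) \<and>
     (\<forall>e e'. e \<noteq> e' \<longrightarrow> ends e' \<noteq> ends e \<and> ends e' \<noteq> prod.swap (ends e)) \<and>
     (\<forall>u v. (u, v) \<in> {(a, b). adjacent ends a b}\<^sup>*)"

definition incidence :: "('e \<Rightarrow> 'n \<times> 'n) \<Rightarrow> real^'n^'e" where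
  "incidence ends = (\<chi> e i. if i = fst (ends e) then 1 else if i = snd (ends e) then -1 else 0)"

end

theory Submission
  imports Defs
begin

(* Write e_t = x^{k+1,t} - x\<^sup>\<star> for the inner iterates. By the KKT conditions and B x\<^sup>\<star> = 0,
   one inner step splits e_{t+1} into three pieces: the error e_t - \<alpha>(\<nabla>f(x^{k+1,t}) - \<nabla>f(x\<^sup>\<star>))
   of a gradient step, of norm at most (1 + \<alpha>L)|e_t|; the dual error -\<alpha>A'(\<lambda>^k - \<lambda>\<^sup>\<star>); and the
   consensus error -\<alpha>B(x^k - x\<^sup>\<star>). Weighted Young inequalities with weights pb, qb together with
   |A'w|^2 \<le> \<rho>(AA')|w|^2 and |Bv| \<le> \<rho>(B)|v| (B is symmetric positive semidefinite) show that the
   potential |e_t|^2 + \<alpha>/\<beta> |\<lambda>^k - \<lambda>\<^sup>\<star>|^2 + \<alpha>\<rho>(B) |x^k - x\<^sup>\<star>|^2 grows at most by the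
   factor \<Gamma>_G per inner step; iterate T - 1 times starting from e_0 = x^k - x\<^sup>\<star>. *)

lemma inner_transpose_matrix_vector:
  fixes S :: "real^'a^'b"
  shows "(transpose S *v u) \<bullet> w = u \<bullet> (S *v w)"
  by (simp add: dot_lmul_matrix)

lemma symmetric_matrix_inner_commute:
  fixes S :: "real^'a^'a"
  assumes "transpose S = S"
  shows "(S *v u) \<bullet> w = u \<bullet> (S *v w)"
  by (metis assms inner_transpose_matrix_vector)

lemma quadratic_nonneg_imp_discriminant_le:
  fixes a b c :: real
  assumes nonneg: "\<And>t. 0 \<le> a + 2 * b * t + c * t\<^sup>2" and "0 \<le> c"
  shows "b\<^sup>2 \<le> a * c"
proof (cases "c = 0")
  case True
  have "b = 0"
    using nonneg[of "- (a + 1) / (2 * b)"] True by (cases "b = 0") auto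
  then show ?thesis using True by simp
next
  case False
  then have "0 < c" using \<open>0 \<le> c\<close> by simp
  have "0 \<le> a + 2 * b * (- b / c) + c * (- b / c)\<^sup>2" by (rule nonneg)
  also have "\<dots> = (a * c - b\<^sup>2) / c"
    using \<open>0 < c\<close> by (simp add: field_simps power2_eq_square)
  finally show ?thesis
    using \<open>0 < c\<close> by (simp add: zero_le_divide_iff)
qed

lemma finite_eigenvalues_symmetric:
  fixes S :: "real^'k^'k"
  assumes sym: "transpose S = S"
  shows "finite {\<mu>. \<exists>v. v \<noteq> 0 \<and> S *v v = \<mu> *\<^sub>R v}" (is "finite ?E")
proof -
  define ev where "ev \<mu> = (SOME v. v \<noteq> 0 \<and> S *v v = \<mu> *\<^sub>R v)" for \<mu>
  have ev: "ev \<mu> \<noteq> 0" "S *v ev \<mu> = \<mu> *\<^sub>R ev \<mu>" if "\<mu> \<in> ?E" for \<mu>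
    using someI_ex[OF that[unfolded mem_Collect_eq]] by (simp_all add: ev_def)
  have "inj_on ev ?E"
  proof (rule inj_onI)
    fix \<mu> \<nu> assume \<mu>: "\<mu> \<in> ?E" and \<nu>: "\<nu> \<in> ?E" and "ev \<mu> = ev \<nu>"
    then have "\<mu> *\<^sub>R ev \<mu> = \<nu> *\<^sub>R ev \<mu>"
      using ev(2)[OF \<mu>] ev(2)[OF \<nu>] by metis
    then show "\<mu> = \<nu>"
      using ev(1)[OF \<mu>] by simp
  qed
  have "pairwise orthogonal (ev ` ?E)"
  proof (rule pairwiseI, unfold orthogonal_def)
    fix a b assume "a \<in> ev ` ?E" "b \<in> ev ` ?E" "a \<noteq> b"
    then obtain \<mu> \<nu> where \<mu>: "\<mu> \<in> ?E" and \<nu>: "\<nu> \<in> ?E" and ab: "a = ev \<mu>" "b = ev \<nu>"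
      by blast
    with \<open>a \<noteq> b\<close> have "\<mu> \<noteq> \<nu>" by blast
    have "(S *v ev \<mu>) \<bullet> ev \<nu> = ev \<mu> \<bullet> (S *v ev \<nu>)"
      by (rule symmetric_matrix_inner_commute[OF sym])
    then have "(\<mu> - \<nu>) * (ev \<mu> \<bullet> ev \<nu>) = 0"
      using ev(2)[OF \<mu>] ev(2)[OF \<nu>] by (simp add: left_diff_distrib)
    with \<open>\<mu> \<noteq> \<nu>\<close> show "a \<bullet> b = 0"
      by (simp add: ab)
  qed
  moreover have "0 \<notin> ev ` ?E"
    using ev(1) by fastforce
  ultimately have "finite (ev ` ?E)"
    by (intro independent_imp_finite pairwise_orthogonal_independent)
  then show ?thesis
    using \<open>inj_on ev ?E\<close> by (rule finite_imageD)
qed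

lemma eigenvalue_le_rho:
  fixes S :: "real^'k^'k"
  assumes "transpose S = S" and "v \<noteq> 0" and "S *v v = \<mu> *\<^sub>R v"
  shows "\<mu> \<le> rho S"
  unfolding rho_def using assms finite_eigenvalues_symmetric[OF assms(1)] by (auto intro!: Max_ge)

lemma rayleigh_maximizer_is_eigenvector:
  fixes S :: "real^'k^'k"
  assumes sym: "transpose S = S"
    and le: "\<And>y. y \<bullet> (S *v y) \<le> \<mu> * (norm y)\<^sup>2"
    and eq: "u \<bullet> (S *v u) = \<mu> * (norm u)\<^sup>2"
  shows "S *v u = \<mu> *\<^sub>R u"
proof -
  define w where "w = S *v u - \<mu> *\<^sub>R u"
  define q where "q y = y \<bullet> (S *v y) - \<mu> * (y \<bullet> y)" for y
  have "q u = 0"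
    using eq by (simp add: q_def power2_norm_eq_inner)
  have expand: "q (u + t *\<^sub>R w) = 2 * (w \<bullet> w) * t + q w * t\<^sup>2" for t
    using \<open>q u = 0\<close> symmetric_matrix_inner_commute[OF sym, of w u]
    by (simp add: q_def w_def matrix_vector_right_distrib matrix_vector_mult_scaleR
        inner_add_left inner_add_right inner_diff_left inner_commute algebra_simps power2_eq_square)
  \<comment> \<open>q \<le> 0 everywhere and q u = 0, so t \<mapsto> q (u + t w) is maximal at 0\<close>
  have "2 * (w \<bullet> w) = 0"
  proof (rule DERIV_local_max)
    show "((\<lambda>t. 2 * (w \<bullet> w) * t + q w * t\<^sup>2) has_real_derivative 2 * (w \<bullet> w)) (at 0)"
      by (auto intro!: derivative_eq_intros)
    show "\<forall>t. \<bar>0 - t\<bar> < 1 \<longrightarrow> 2 * (w \<bullet> w) * t + q w * t\<^sup>2 \<le> 2 * (w \<bullet> w) * 0 + q w * 0\<^sup>2"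
    proof (intro allI impI)
      fix t :: real
      have "q (u + t *\<^sub>R w) \<le> 0"
        using le[of "u + t *\<^sub>R w"] by (simp add: q_def power2_norm_eq_inner)
      then show "2 * (w \<bullet> w) * t + q w * t\<^sup>2 \<le> 2 * (w \<bullet> w) * 0 + q w * 0\<^sup>2"
        by (simp add: expand)
    qed
  qed simp
  then show ?thesis
    by (simp add: w_def)
qed

lemma inner_matrix_vector_le_rho:
  fixes S :: "real^'k^'k"
  assumes sym: "transpose S = S"
  shows "v \<bullet> (S *v v) \<le> rho S * (norm v)\<^sup>2"
proof -
  have "continuous_on (sphere 0 1) (\<lambda>y. y \<bullet> (S *v y))"
    by (intro continuous_intros continuous_on_compose2[of UNIV "(*v) S"] linear_continuous_on)
      (auto simp: matrix_vector_mul_linear)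
  moreover have "sphere (0::real^'k) 1 \<noteq> {}"
    by (simp add: sphere_def) (metis norm_Basis SOME_Basis)
  ultimately obtain u where u: "u \<in> sphere 0 1"
    and max: "\<And>y. y \<in> sphere 0 1 \<Longrightarrow> y \<bullet> (S *v y) \<le> u \<bullet> (S *v u)"
    using continuous_attains_sup[OF compact_sphere] by blast
  define \<mu> where "\<mu> = u \<bullet> (S *v u)"
  have bound: "y \<bullet> (S *v y) \<le> \<mu> * (norm y)\<^sup>2" for y
  proof (cases "y = 0")
    case False
    have "(y /\<^sub>R norm y) \<bullet> (S *v (y /\<^sub>R norm y)) \<le> \<mu>"
      using max[of "y /\<^sub>R norm y"] False by (simp add: \<mu>_def)
    then show ?thesis
      using False by (simp add: matrix_vector_mult_scaleR field_simps power2_eq_square)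
  qed simp
  have "S *v u = \<mu> *\<^sub>R u"
    using u by (intro rayleigh_maximizer_is_eigenvector[OF sym bound]) (simp add: \<mu>_def)
  then have "\<mu> \<le> rho S"
    using u by (intro eigenvalue_le_rho[OF sym]) auto
  then show ?thesis
    using bound[of v] by (meson mult_right_mono order_trans zero_le_power2)
qed

lemma rho_nonneg:
  fixes S :: "real^'k^'k"
  assumes "transpose S = S" and "\<And>v. 0 \<le> v \<bullet> (S *v v)"
  shows "0 \<le> rho S"
proof -
  obtain v :: "real^'k" where "v \<in> Basis"
    using SOME_Basis by blast
  then show ?thesis
    using inner_matrix_vector_le_rho[OF assms(1), of v] assms(2)[of v] by simp
qed

lemma psd_cauchy_schwarz:
  fixes S :: "real^'k^'k"
  assumes sym: "transpose S = S" and psd: "\<And>v. 0 \<le> v \<bullet> (S *v v)"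
  shows "(u \<bullet> (S *v v))\<^sup>2 \<le> (u \<bullet> (S *v u)) * (v \<bullet> (S *v v))"
proof (rule quadratic_nonneg_imp_discriminant_le)
  fix t
  have "0 \<le> (u + t *\<^sub>R v) \<bullet> (S *v (u + t *\<^sub>R v))"
    by (rule psd)
  also have "\<dots> = u \<bullet> (S *v u) + 2 * (u \<bullet> (S *v v)) * t + v \<bullet> (S *v v) * t\<^sup>2"
    using symmetric_matrix_inner_commute[OF sym, of v u]
    by (simp add: matrix_vector_right_distrib matrix_vector_mult_scaleR inner_add_left
        inner_add_right inner_commute algebra_simps power2_eq_square)
  finally show "0 \<le> u \<bullet> (S *v u) + 2 * (u \<bullet> (S *v v)) * t + v \<bullet> (S *v v) * t\<^sup>2" .
qed (rule psd)

lemma norm_matrix_vector_sq_le_rho_sq: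
  fixes S :: "real^'k^'k"
  assumes sym: "transpose S = S" and psd: "\<And>v. 0 \<le> v \<bullet> (S *v v)"
  shows "(norm (S *v v))\<^sup>2 \<le> (rho S)\<^sup>2 * (norm v)\<^sup>2"
proof -
  define u where "u = S *v v"
  have "0 \<le> rho S"
    by (rule rho_nonneg[OF sym psd])
  have "(u \<bullet> u)\<^sup>2 \<le> (u \<bullet> (S *v u)) * (v \<bullet> (S *v v))"
    using psd_cauchy_schwarz[OF sym psd, of u v] by (simp add: u_def)
  also have "\<dots> \<le> (rho S * (u \<bullet> u)) * (v \<bullet> (S *v v))"
    using inner_matrix_vector_le_rho[OF sym, of u] psd[of v]
    by (intro mult_right_mono) (simp_all add: power2_norm_eq_inner)
  finally have "(u \<bullet> u) * (u \<bullet> u) \<le> (u \<bullet> u) * (rho S * (v \<bullet> (S *v v)))"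
    by (simp add: power2_eq_square ac_simps)
  then have "u \<bullet> u \<le> rho S * (v \<bullet> (S *v v))"
    using psd[of v] \<open>0 \<le> rho S\<close> inner_ge_zero[of u]
    by (cases "u \<bullet> u = 0") (simp_all add: mult_le_cancel_left_pos)
  also have "\<dots> \<le> rho S * (rho S * (v \<bullet> v))"
    using inner_matrix_vector_le_rho[OF sym, of v] \<open>0 \<le> rho S\<close>
    by (intro mult_left_mono) (simp_all add: power2_norm_eq_inner)
  finally show ?thesis
    unfolding power2_norm_eq_inner by (simp add: u_def power2_eq_square mult.assoc)
qed

lemma norm_transpose_matrix_vector_sq_le:
  fixes A :: "real^'n^'e"
  shows "(norm (transpose A *v w))\<^sup>2 \<le> rho (A ** transpose A) * (norm w)\<^sup>2"
proof -
  have "(norm (transpose A *v w))\<^sup>2 = (transpose A *v w) \<bullet> (transpose A *v w)"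
    by (rule power2_norm_eq_inner)
  also have "\<dots> = w \<bullet> (A *v (transpose A *v w))"
    by (rule inner_transpose_matrix_vector)
  also have "\<dots> = w \<bullet> ((A ** transpose A) *v w)"
    by (simp only: matrix_vector_mul_assoc)
  also have "\<dots> \<le> rho (A ** transpose A) * (norm w)\<^sup>2"
    by (rule inner_matrix_vector_le_rho) (simp add: matrix_transpose_mul)
  finally show ?thesis .
qed

lemma norm_add_sq_le_weighted:
  fixes x y :: "'a::real_normed_vector"
  assumes "1 < p"
  shows "(norm (x + y))\<^sup>2 \<le> p * (norm x)\<^sup>2 + p / (p - 1) * (norm y)\<^sup>2"
proof -
  define r where "r = p - 1"
  have "0 < r" using assms by (simp add: r_def)
  have "2 * norm x * norm y \<le> r * (norm x)\<^sup>2 + (norm y)\<^sup>2 / r"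
  proof -
    have "0 \<le> (r * norm x - norm y)\<^sup>2 / r"
      using \<open>0 < r\<close> by simp
    also have "\<dots> = r * (norm x)\<^sup>2 + (norm y)\<^sup>2 / r - 2 * norm x * norm y"
      using \<open>0 < r\<close> by (simp add: field_simps power2_eq_square)
    finally show ?thesis by simp
  qed
  have "(norm (x + y))\<^sup>2 \<le> (norm x + norm y)\<^sup>2"
    by (simp add: norm_triangle_ineq power_mono)
  also have "\<dots> = (norm x)\<^sup>2 + 2 * norm x * norm y + (norm y)\<^sup>2"
    by (simp add: power2_eq_square algebra_simps)
  also have "\<dots> \<le> (1 + r) * (norm x)\<^sup>2 + (1 + 1 / r) * (norm y)\<^sup>2"
    using \<open>2 * norm x * norm y \<le> _\<close> by (simp add: algebra_simps)
  also have "\<dots> = p * (norm x)\<^sup>2 + p / (p - 1) * (norm y)\<^sup>2"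
    using \<open>0 < r\<close> by (simp add: r_def field_simps)
  finally show ?thesis .
qed

lemma norm_add3_sq_le_weighted:
  fixes a b c :: "'a::real_normed_vector"
  assumes p: "1 < p" and q: "1 < q"
  shows "(norm (a + b + c))\<^sup>2
           \<le> p * (norm a)\<^sup>2 + p * q / (p - 1) * (norm b)\<^sup>2 + p * q / ((p - 1) * (q - 1)) * (norm c)\<^sup>2"
proof -
  have "(norm (a + (b + c)))\<^sup>2 \<le> p * (norm a)\<^sup>2 + p / (p - 1) * (norm (b + c))\<^sup>2"
    by (rule norm_add_sq_le_weighted[OF p])
  also have "\<dots> \<le> p * (norm a)\<^sup>2 + p / (p - 1) * (q * (norm b)\<^sup>2 + q / (q - 1) * (norm c)\<^sup>2)"
    using p by (intro add_left_mono mult_left_mono norm_add_sq_le_weighted[OF q]) simp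
  finally show ?thesis
    by (simp add: add.assoc distrib_left mult.assoc)
qed

lemma norm_separable_gradient_step_le:
  fixes y z :: "real^'n"
  assumes deriv: "\<And>i t. (g i has_real_derivative g' i t) (at t)"
    and bound: "\<And>i t. \<bar>g' i t\<bar> \<le> L" and "0 \<le> \<alpha>"
  shows "norm (y - z - \<alpha> *\<^sub>R ((\<chi> i. g i (y $ i)) - (\<chi> i. g i (z $ i))))
           \<le> (1 + \<alpha> * L) * norm (y - z)"
proof -
  have "0 \<le> L" using bound[of undefined 0] by linarith
  have "\<bar>y $ i - z $ i - \<alpha> * (g i (y $ i) - g i (z $ i))\<bar> \<le> (1 + \<alpha> * L) * \<bar>y $ i - z $ i\<bar>" for i
  proof -
    have "((\<lambda>s. s - \<alpha> * g i s) has_real_derivative 1 - \<alpha> * g' i s) (at s)" for s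
      by (auto intro!: derivative_eq_intros deriv)
    moreover have "\<bar>1 - \<alpha> * g' i s\<bar> \<le> 1 + \<alpha> * L" for s
    proof -
      have "\<bar>\<alpha> * g' i s\<bar> \<le> \<alpha> * L"
        using \<open>0 \<le> \<alpha>\<close> by (simp add: abs_mult mult_left_mono bound)
      then show ?thesis
        using abs_triangle_ineq4[of 1 "\<alpha> * g' i s"] by linarith
    qed
    ultimately show ?thesis
      using field_differentiable_bound[of UNIV "\<lambda>s. s - \<alpha> * g i s" "\<lambda>s. 1 - \<alpha> * g' i s"
          "1 + \<alpha> * L" "y $ i" "z $ i"] by (simp add: algebra_simps)
  qed
  then have "norm (y - z - \<alpha> *\<^sub>R ((\<chi> i. g i (y $ i)) - (\<chi> i. g i (z $ i))))
              \<le> norm ((1 + \<alpha> * L) *\<^sub>R (y - z))"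
    using \<open>0 \<le> \<alpha>\<close> \<open>0 \<le> L\<close> by (intro norm_le_componentwise_cart) (simp add: abs_mult)
  then show ?thesis
    using \<open>0 \<le> \<alpha>\<close> \<open>0 \<le> L\<close> by simp
qed

lemma inner_step_error_le:
  fixes A :: "real^'n^'e" and B :: "real^'n^'n" and g g' :: "'n \<Rightarrow> real \<Rightarrow> real"
  defines "grad \<equiv> \<lambda>y::real^'n. \<chi> i. g i (y $ i)"
  assumes deriv: "\<And>i t. (g i has_real_derivative g' i t) (at t)"
    and bound: "\<And>i t. \<bar>g' i t\<bar> \<le> L"
    and B_sym: "transpose B = B" and B_psd: "\<And>v. 0 \<le> v \<bullet> (B *v v)"
    and KKT: "grad xs + transpose A *v ls = 0" and "B *v xs = 0"
    and "0 \<le> \<alpha>" and p: "1 < p" and q: "1 < q"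
  shows "(norm (y - \<alpha> *\<^sub>R grad y - \<alpha> *\<^sub>R (transpose A *v lam) - \<alpha> *\<^sub>R (B *v x) - xs))\<^sup>2
           \<le> p * (1 + \<alpha> * L)\<^sup>2 * (norm (y - xs))\<^sup>2
             + p * q / (p - 1) * (\<alpha>\<^sup>2 * rho (A ** transpose A)) * (norm (lam - ls))\<^sup>2
             + p * q / ((p - 1) * (q - 1)) * (\<alpha>\<^sup>2 * (rho B)\<^sup>2) * (norm (x - xs))\<^sup>2"
proof -
  define a where "a = y - xs - \<alpha> *\<^sub>R (grad y - grad xs)"
  define b where "b = - \<alpha> *\<^sub>R (transpose A *v (lam - ls))"
  define c where "c = - \<alpha> *\<^sub>R (B *v (x - xs))"
  have "grad xs = - (transpose A *v ls)"
    using KKT by (simp add: eq_neg_iff_add_eq_0)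
  then have "y - \<alpha> *\<^sub>R grad y - \<alpha> *\<^sub>R (transpose A *v lam) - \<alpha> *\<^sub>R (B *v x) - xs = a + b + c"
    using \<open>B *v xs = 0\<close> unfolding a_def b_def c_def
    by (simp add: matrix_vector_mult_diff_distrib algebra_simps)
  moreover have "(norm a)\<^sup>2 \<le> (1 + \<alpha> * L)\<^sup>2 * (norm (y - xs))\<^sup>2"
    using norm_separable_gradient_step_le[OF deriv bound \<open>0 \<le> \<alpha>\<close>, of y xs]
    unfolding a_def grad_def power_mult_distrib[symmetric] by (intro power_mono) simp_all
  moreover have "(norm b)\<^sup>2 \<le> \<alpha>\<^sup>2 * rho (A ** transpose A) * (norm (lam - ls))\<^sup>2"
    using mult_left_mono[OF norm_transpose_matrix_vector_sq_le[of A "lam - ls"], of "\<alpha>\<^sup>2"]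
    by (simp add: b_def power_mult_distrib mult.assoc)
  moreover have "(norm c)\<^sup>2 \<le> \<alpha>\<^sup>2 * (rho B)\<^sup>2 * (norm (x - xs))\<^sup>2"
    using mult_left_mono[OF norm_matrix_vector_sq_le_rho_sq[OF B_sym B_psd, of "x - xs"], of "\<alpha>\<^sup>2"]
    by (simp add: c_def power_mult_distrib mult.assoc)
  moreover have "0 \<le> p * q / (p - 1)" "0 \<le> p * q / ((p - 1) * (q - 1))"
    using p q by simp_all
  ultimately show ?thesis
    using norm_add3_sq_le_weighted[OF p q, of a b c] p
    by (smt (verit, best) mult.assoc mult_left_mono)
qed

lemma potential_step_le:
  fixes E E' \<Lambda> D \<alpha> \<beta> \<rho>A \<rho>B p q L \<Gamma> :: real
  assumes E': "E' \<le> p * (1 + \<alpha> * L)\<^sup>2 * E + p * q / (p - 1) * (\<alpha>\<^sup>2 * \<rho>A) * \<Lambda>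
                    + p * q / ((p - 1) * (q - 1)) * (\<alpha>\<^sup>2 * \<rho>B\<^sup>2) * D"
    and \<Gamma>1: "p * (1 + \<alpha> * L)\<^sup>2 \<le> \<Gamma>"
    and \<Gamma>2: "1 + p * q * \<alpha> * \<beta> * \<rho>A / (p - 1) \<le> \<Gamma>"
    and \<Gamma>3: "1 + p * q * \<alpha> * \<rho>B / ((p - 1) * (q - 1)) \<le> \<Gamma>"
    and "0 \<le> E" "0 \<le> \<Lambda>" "0 \<le> D" "0 \<le> \<alpha>" "0 < \<beta>" "0 \<le> \<rho>B"
  shows "E' + \<alpha> / \<beta> * \<Lambda> + \<alpha> * \<rho>B * D \<le> \<Gamma> * (E + \<alpha> / \<beta> * \<Lambda> + \<alpha> * \<rho>B * D)"
proof -
  have dual: "\<alpha> / \<beta> * \<Lambda> + p * q / (p - 1) * (\<alpha>\<^sup>2 * \<rho>A) * \<Lambda>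
                = (1 + p * q * \<alpha> * \<beta> * \<rho>A / (p - 1)) * (\<alpha> / \<beta> * \<Lambda>)"
    using \<open>0 < \<beta>\<close> by (simp add: field_simps power2_eq_square)
  have consensus: "\<alpha> * \<rho>B * D + p * q / ((p - 1) * (q - 1)) * (\<alpha>\<^sup>2 * \<rho>B\<^sup>2) * D
                = (1 + p * q * \<alpha> * \<rho>B / ((p - 1) * (q - 1))) * (\<alpha> * \<rho>B * D)"
    by (simp add: field_simps power2_eq_square)
  have "E' + \<alpha> / \<beta> * \<Lambda> + \<alpha> * \<rho>B * D
          \<le> p * (1 + \<alpha> * L)\<^sup>2 * E + (1 + p * q * \<alpha> * \<beta> * \<rho>A / (p - 1)) * (\<alpha> / \<beta> * \<Lambda>)
            + (1 + p * q * \<alpha> * \<rho>B / ((p - 1) * (q - 1))) * (\<alpha> * \<rho>B * D)"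
    using E' dual consensus by linarith
  also have "\<dots> \<le> \<Gamma> * E + \<Gamma> * (\<alpha> / \<beta> * \<Lambda>) + \<Gamma> * (\<alpha> * \<rho>B * D)"
    using assms(5-) by (intro add_mono mult_right_mono \<Gamma>1 \<Gamma>2 \<Gamma>3) auto
  finally show ?thesis
    by (simp add: distrib_left)
qed

lemma le_power_mult_if_stepwise_le:
  fixes V :: "nat \<Rightarrow> real"
  assumes "\<And>t. t < n \<Longrightarrow> V (Suc t) \<le> c * V t" and "0 \<le> c"
  shows "V n \<le> c ^ n * V 0"
  using assms(1)
proof (induction n)
  case (Suc n)
  have "V (Suc n) \<le> c * V n"
    by (rule Suc.prems) simp
  also have "\<dots> \<le> c * (c ^ n * V 0)"
    using Suc \<open>0 \<le> c\<close> by (intro mult_left_mono) auto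
  finally show ?case by simp
qed simp

theorem lemma3p9:
  fixes ends :: "'e::finite \<Rightarrow> 'n::finite \<times> 'n"
    and A :: "real^'n^'e" and B :: "real^'n^'n"
    and fs fd fdd :: "'n \<Rightarrow> real \<Rightarrow> real"
    and m L \<alpha> \<beta> pb qb :: real and T :: nat
    and xs :: "real^'n" and ls :: "real^'e"
    and x :: "nat \<Rightarrow> real^'n" and xin :: "nat \<Rightarrow> nat \<Rightarrow> real^'n"
    and lam :: "nat \<Rightarrow> real^'e"
    and k :: nat
  defines "F \<equiv> \<lambda>y::real^'n. \<Sum>i\<in>UNIV. fs i (y $ i)"
    and "grad \<equiv> \<lambda>y::real^'n. \<chi> i. fd i (y $ i)"
  assumes graph: "simple_connected_graph ends"
    and A_def: "A = incidence ends"
    and f_d1: "\<And>i t. (fs i has_real_derivative fd i t) (at t)"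
    and f_d2: "\<And>i t. (fd i has_real_derivative fdd i t) (at t)"
    and m_pos: "0 < m" and m_le: "\<And>i t. m \<le> fdd i t" and L_ge: "\<And>i t. fdd i t \<le> L"
    and B_sym: "transpose B = B"
    and B_psd: "\<And>v. 0 \<le> v \<bullet> (B *v v)"
    and B_null: "{v. B *v v = 0} = {v. A *v v = 0}"
    and B_sparse: "\<And>i j. i \<noteq> j \<Longrightarrow> B $ i $ j \<noteq> 0 \<Longrightarrow> adjacent ends i j"
    and B_rho: "rho B < m"
    and xs_feas: "A *v xs = 0"
    and xs_min: "\<And>y. A *v y = 0 \<Longrightarrow> F xs \<le> F y"
    and xs_uniq: "\<And>y. A *v y = 0 \<Longrightarrow> F y \<le> F xs \<Longrightarrow> y = xs"
    and ls_KKT: "grad xs + transpose A *v ls = 0"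
    and xs_B: "B *v xs = 0"
    and ls_col: "ls \<in> range (\<lambda>y. A *v y)"
    and \<alpha>_pos: "0 < \<alpha>" and \<beta>_pos: "0 < \<beta>" and T_ge: "1 \<le> T"
    and lam0: "lam 0 = 0"
    and inner0: "\<And>j. xin j 0 = x j"
    and inner_step: "\<And>j t. t < T \<Longrightarrow> xin j (Suc t) = xin j t - \<alpha> *\<^sub>R grad (xin j t)
                        - \<alpha> *\<^sub>R (transpose A *v lam j) - \<alpha> *\<^sub>R (B *v x j)"
    and x_step: "\<And>j. x (Suc j) = xin j T"
    and lam_step: "\<And>j. lam (Suc j) = lam j + \<beta> *\<^sub>R (A *v x (Suc j))"
    and pb_gt: "pb > 1" and qb_gt: "qb > 1"
  shows "let c1 = 1 + \<alpha> * rho B;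
             \<Gamma> = Max {pb * (1 + \<alpha> * L)\<^sup>2,
                      1 + pb * qb * \<alpha> * \<beta> * rho (A ** transpose A) / (pb - 1),
                      1 + pb * qb * \<alpha> * rho B / ((pb - 1) * (qb - 1))}
         in (norm (xin k (T - 1) - xs))\<^sup>2 + \<alpha> / \<beta> * (norm (lam k - ls))\<^sup>2
              + \<alpha> * rho B * (norm (x k - xs))\<^sup>2
            \<le> \<Gamma> ^ (T - 1) * (c1 * (norm (x k - xs))\<^sup>2 + \<alpha> / \<beta> * (norm (lam k - ls))\<^sup>2)"
proof -
  define \<Gamma> where "\<Gamma> = Max {pb * (1 + \<alpha> * L)\<^sup>2,
                      1 + pb * qb * \<alpha> * \<beta> * rho (A ** transpose A) / (pb - 1),
                      1 + pb * qb * \<alpha> * rho B / ((pb - 1) * (qb - 1))}"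
  define V where "V t = (norm (xin k t - xs))\<^sup>2 + \<alpha> / \<beta> * (norm (lam k - ls))\<^sup>2
                        + \<alpha> * rho B * (norm (x k - xs))\<^sup>2" for t
  have \<Gamma>_ge: "pb * (1 + \<alpha> * L)\<^sup>2 \<le> \<Gamma>"
      "1 + pb * qb * \<alpha> * \<beta> * rho (A ** transpose A) / (pb - 1) \<le> \<Gamma>"
      "1 + pb * qb * \<alpha> * rho B / ((pb - 1) * (qb - 1)) \<le> \<Gamma>"
    unfolding \<Gamma>_def by (auto intro!: Max_ge)
  have fdd_bound: "\<bar>fdd i t\<bar> \<le> L" for i t
    using m_pos m_le[of i t] L_ge[of i t] by (simp add: abs_le_iff)
  have "V (Suc t) \<le> \<Gamma> * V t" if "t < T" for t
  proof -
    have "(norm (xin k (Suc t) - xs))\<^sup>2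
            \<le> pb * (1 + \<alpha> * L)\<^sup>2 * (norm (xin k t - xs))\<^sup>2
              + pb * qb / (pb - 1) * (\<alpha>\<^sup>2 * rho (A ** transpose A)) * (norm (lam k - ls))\<^sup>2
              + pb * qb / ((pb - 1) * (qb - 1)) * (\<alpha>\<^sup>2 * (rho B)\<^sup>2) * (norm (x k - xs))\<^sup>2"
      unfolding inner_step[OF that] grad_def
      using inner_step_error_le[OF f_d2 fdd_bound B_sym B_psd ls_KKT[unfolded grad_def] xs_B]
        \<alpha>_pos pb_gt qb_gt by simp
    then show ?thesis
      unfolding V_def using \<alpha>_pos \<beta>_pos rho_nonneg[OF B_sym B_psd]
      by (intro potential_step_le[OF _ \<Gamma>_ge]) simp_all
  qed
  moreover have "0 \<le> \<Gamma>"
    using \<Gamma>_ge(1) pb_gt by (smt (verit) zero_le_mult_iff zero_le_power2)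
  ultimately have "V (T - 1) \<le> \<Gamma> ^ (T - 1) * V 0"
    by (intro le_power_mult_if_stepwise_le) auto
  then show ?thesis
    unfolding Let_def \<Gamma>_def[symmetric] by (simp add: V_def inner0 algebra_simps)
qed

end
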